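(* For every integer $m\ge2$, $$\sum_{k=1}^\infty\frac{\binom{2k}{m}}{5^k(2k-1)k^2(2k+1)}=\frac{2(-1)^m}{m}\ln\frac54-(-1)^m2\sqrt5\ln\alpha+\frac{F_{m-1}}{m-1}\frac{1}{2^{m-1}}+\frac{F_m}{m}\frac1{2^m}$$ $$+\frac2m\sum_{j=1}^{\lfloor (m-1)/2\rfloor}\frac{L_{m-2j}}{m-2j}\frac{1}{2^{m-2j}}-\frac2m\sum_{j=1}^{\lceil (m-1)/2\rceil}\frac{L_{m-2j+1}}{m-2j+1}\frac{1}{2^{m-2j+1}}$$ $$-5\sum_{j=0}^{\lfloor (m-1)/2\rfloor}\frac{F_{m-2j}}{m-2j}\frac{1}{2^{m-2j}}+5\sum_{j=1}^{\lceil (m-1)/2\rceil}\frac{F_{m-2j+1}}{m-2j+1}\frac{1}{2^{m-2j+1}}.$$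
   Context: $F_n=(\alpha^n-\beta^n)/(\alpha-\beta)$ and $L_n=\alpha^n+\beta^n$ are the Fibonacci and Lucas numbers, with $\alpha=(1+\sqrt5)/2$, $\beta=(1-\sqrt5)/2$. Empty sums are $0$. *)

theory Defs
  imports Complex_Main
begin

definition alpha :: real where "alpha = (1 + sqrt 5) / 2"
definition beta :: real where "beta = (1 - sqrt 5) / 2"

definition Fib :: "int \<Rightarrow> real" where
  "Fib n = (alpha powi n - beta powi n) / (alpha - beta)"
definition Luc :: "int \<Rightarrow> real" where
  "Luc n = alpha powi n + beta powi n"

end

theory Submission
  imports Defs "HOL-Analysis.Analysis"
begin

(* Split 1/((2k-1) k^2 (2k+1)) = -1/k^2 + 2/(2k-1) - 2/(2k+1) into partial fractions.
   Dividing binom(2k,m) by k, 2k-1 or 2k+1 and expanding with Pascal's rule turns each of the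
   three series into a combination of sum_k binom(2k,j)/5^k, sum_k binom(2k+1,j)/5^k and the
   logarithmic series sum_k 1/(2k 5^k) = ln(5/4)/2 and sum_k 1/((2k+1) 5^k) = sqrt 5 ln alpha.
   The even and odd parts of the binomial series sum_n binom(n,j) t^n = t^j/(1-t)^(j+1) at
   t = 1/sqrt 5 evaluate the first two to 5 F_(j+1)/2^(j+2) and 5 L_(j+1)/2^(j+2), because
   t/(1-t) = alpha/2 and -t/(1+t) = beta/2.  Grouping the resulting alternating sums over i by
   the parity of m - i gives the floor and ceiling sums of the statement. *)

lemma sums_choose_mult_power:
  fixes t :: real
  assumes "\<bar>t\<bar> < 1"
  shows "(\<lambda>n. real (n choose j) * t ^ n) sums (t ^ j / (1 - t) ^ Suc j)"
proof -
  have "(\<lambda>n. (- real (Suc j) gchoose n) * (-t) ^ n) sums (1 - t) powr (- real (Suc j))"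
    using gen_binomial_real[of "-t" "- real (Suc j)"] assms by simp
  moreover have "(- real (Suc j) gchoose n) * (-t) ^ n = real (n + j choose j) * t ^ n" for n
  proof -
    have "(- real (Suc j) gchoose n) = (-1) ^ n * ((real (Suc j) + real n - 1) gchoose n)"
      by (rule gbinomial_minus)
    also have "real (Suc j) + real n - 1 = real (n + j)"
      by simp
    finally have "(- real (Suc j) gchoose n) = (-1) ^ n * real (n + j choose n)"
      by (simp add: binomial_gbinomial)
    then show ?thesis
      by (simp add: binomial_symmetric[of n "n + j"] power_minus')
  qed
  moreover have "(1 - t) powr (- real (Suc j)) = 1 / (1 - t) ^ Suc j"
    using assms by (subst powr_minus_divide, subst powr_realpow) auto
  ultimately have "(\<lambda>n. t ^ j * (real (n + j choose j) * t ^ n)) sums (t ^ j * (1 / (1 - t) ^ Suc j))"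
    by (intro sums_mult) simp
  then have "(\<lambda>n. real (n + j choose j) * t ^ (n + j)) sums (t ^ j / (1 - t) ^ Suc j)"
    by (simp add: power_add mult_ac)
  then show ?thesis
    by (subst (asm) sums_zero_iff_shift) auto
qed

lemma sums_even_odd_terms:
  fixes f :: "nat \<Rightarrow> 'a::real_normed_field"
  assumes "f sums a" and "(\<lambda>n. (-1) ^ n * f n) sums b"
  shows "(\<lambda>k. f (2 * k)) sums ((a + b) / 2)" and "(\<lambda>k. f (2 * k + 1)) sums ((a - b) / 2)"
proof -
  have odd_off: "odd n" if "n \<notin> range (\<lambda>k. 2 * k)" for n :: nat
    using that by (auto elim: evenE)
  have even_off: "even n" if "n \<notin> range (\<lambda>k. 2 * k + 1)" for n :: nat
    using that by (metis oddE rangeI)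
  have "(\<lambda>n. (f n + (-1) ^ n * f n) / 2) sums ((a + b) / 2)"
    by (intro sums_divide sums_add assms)
  then show "(\<lambda>k. f (2 * k)) sums ((a + b) / 2)"
    by (subst (asm) sums_mono_reindex[of "\<lambda>k. 2 * k", symmetric])
      (auto simp: strict_mono_def odd_off)
  have "(\<lambda>n. (f n - (-1) ^ n * f n) / 2) sums ((a - b) / 2)"
    by (intro sums_divide sums_diff assms)
  then show "(\<lambda>k. f (2 * k + 1)) sums ((a - b) / 2)"
    by (subst (asm) sums_mono_reindex[of "\<lambda>k. 2 * k + 1", symmetric])
      (auto simp: strict_mono_def even_off)
qed

lemma choose_div_Suc: "real (Suc n choose Suc r) / real (Suc n) = real (n choose r) / real (Suc r)"
proof -
  have "real (Suc n) * real (n choose r) = real (Suc n choose Suc r) * real (Suc r)"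
    using Suc_times_binomial_eq[of n r] by (metis of_nat_mult)
  then show ?thesis
    by (simp add: field_simps)
qed

lemma choose_Suc_Suc_div_Suc:
  "real (Suc (Suc n) choose Suc (Suc r)) / real (Suc n)
     = real (n choose Suc r) / real (Suc (Suc r)) + real (n choose r) / real (Suc r)"
  by (simp only: binomial_Suc_Suc[of "Suc n"] of_nat_add add_divide_distrib choose_div_Suc)

lemma choose_div_Suc_alternating:
  "real (n choose r) / real (Suc n)
     = (-1) ^ r / real (Suc n) + (\<Sum>i = 1..r. (-1) ^ (r - i) * real (n choose (i - 1)) / real i)"
proof (induction r)
  case 0
  then show ?case by simp
next
  case (Suc r)
  have "real (n choose Suc r) / real (Suc n)
      = real (Suc n choose Suc r) / real (Suc n) - real (n choose r) / real (Suc n)"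
    by (simp add: binomial_Suc_Suc add_divide_distrib)
  also have "\<dots> = real (n choose r) / real (Suc r) - real (n choose r) / real (Suc n)"
    by (simp only: choose_div_Suc)
  also have "\<dots> = (-1) ^ Suc r / real (Suc n)
      + (\<Sum>i = 1..Suc r. (-1) ^ (Suc r - i) * real (n choose (i - 1)) / real i)"
    unfolding Suc.IH by (simp add: sum_negf[symmetric] Suc_diff_le)
  finally show ?case .
qed

lemma choose_div_Suc_square_alternating:
  "real (Suc n choose Suc r) / (real (Suc n))\<^sup>2
     = ((-1) ^ r / real (Suc n) + (\<Sum>i = 1..r. (-1) ^ (r - i) * real (n choose (i - 1)) / real i))
       / real (Suc r)"
proof -
  have "real (Suc n choose Suc r) / (real (Suc n))\<^sup>2
      = real (Suc n choose Suc r) / real (Suc n) / real (Suc n)"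
    by (simp add: power2_eq_square)
  also have "\<dots> = real (n choose r) / real (Suc n) / real (Suc r)"
    by (simp only: choose_div_Suc) (simp add: field_simps)
  finally show ?thesis
    by (simp only: choose_div_Suc_alternating)
qed

lemma partial_fractions_quartic:
  fixes x :: real
  assumes "x \<noteq> 0" and "2 * x - 1 \<noteq> 0" and "2 * x + 1 \<noteq> 0"
  shows "c / (y * (2 * x - 1) * x\<^sup>2 * (2 * x + 1))
    = - (c / (y * x\<^sup>2)) + 2 * (c / (y * (2 * x - 1))) - 2 * (c / (y * (2 * x + 1)))"
proof -
  have inverse: "1 / ((2 * x - 1) * x\<^sup>2 * (2 * x + 1)) = - 1 / x\<^sup>2 + 2 / (2 * x - 1) - 2 / (2 * x + 1)"
    using assms by (simp add: field_simps) (simp add: algebra_simps power2_eq_square)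
  have distribute: "c / y * (- 1 / a + 2 / b - 2 / d) = - (c / (y * a)) + 2 * (c / (y * b)) - 2 * (c / (y * d))"
    for a b d :: real
    by (simp add: algebra_simps divide_inverse inverse_mult_distrib)
  have "c / (y * (2 * x - 1) * x\<^sup>2 * (2 * x + 1)) = c / y * (1 / ((2 * x - 1) * x\<^sup>2 * (2 * x + 1)))"
    by (simp add: divide_inverse inverse_mult_distrib mult_ac)
  also have "\<dots> = c / y * (- 1 / x\<^sup>2 + 2 / (2 * x - 1) - 2 / (2 * x + 1))"
    by (simp only: inverse)
  also have "\<dots> = - (c / (y * x\<^sup>2)) + 2 * (c / (y * (2 * x - 1))) - 2 * (c / (y * (2 * x + 1)))"
    by (rule distribute)
  finally show ?thesis .
qed

lemma sum_alternating_Suc: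
  fixes g :: "nat \<Rightarrow> 'a::comm_ring_1"
  shows "(\<Sum>i = 1..Suc n. (-1) ^ (Suc n - i) * g i) = g (Suc n) - (\<Sum>i = 1..n. (-1) ^ (n - i) * g i)"
  by (simp add: sum_negf[symmetric] Suc_diff_le)

lemma sum_alternating_parity_split:
  fixes g :: "int \<Rightarrow> 'a::comm_ring_1"
  shows "(\<Sum>j = 1..n div 2. g (int n + 1 - 2 * int j)) - (\<Sum>j = 1..Suc n div 2. g (int n + 2 - 2 * int j))
    = - (\<Sum>i = 1..n. (-1) ^ (n - i) * g (int i))"
proof (induction n)
  case 0
  then show ?case by simp
next
  case (Suc n)
  have shift: "(\<Sum>j = 1..Suc N. h j) = h 1 + (\<Sum>j = 1..N. h (Suc j))" for N and h :: "nat \<Rightarrow> 'a"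
    by (simp add: sum.atLeast_Suc_atMost sum.shift_bounds_cl_Suc_ivl del: sum.cl_ivl_Suc)
  have half: "Suc (Suc n) div 2 = Suc (n div 2)"
    by simp
  have odd_part: "(\<Sum>j = 1..Suc (Suc n) div 2. g (int (Suc n) + 2 - 2 * int j))
      = g (int (Suc n)) + (\<Sum>j = 1..n div 2. g (int n + 1 - 2 * int j))"
    unfolding half shift by (simp add: algebra_simps)
  have even_part: "(\<Sum>j = 1..Suc n div 2. g (int (Suc n) + 1 - 2 * int j))
      = (\<Sum>j = 1..Suc n div 2. g (int n + 2 - 2 * int j))"
    by (simp add: algebra_simps)
  show ?case
    unfolding odd_part even_part sum_alternating_Suc[where g = "\<lambda>i. g (int i)"]
    using Suc.IH by (simp add: algebra_simps)
qed

lemma sum_floor_ceiling_half_alternating: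
  fixes g :: "int \<Rightarrow> 'a::comm_ring_1"
  assumes "m \<ge> 1"
  shows "(\<Sum>j = 1..\<lfloor>(real m - 1) / 2\<rfloor>. g (int m - 2 * j))
       = (\<Sum>j = 1..\<lceil>(real m - 1) / 2\<rceil>. g (int m - 2 * j + 1))
         + (\<Sum>i = 1..m - 1. (-1) ^ (m - i) * g (int i))" (is "?S1 = ?T + _")
    and "(\<Sum>j = 0..\<lfloor>(real m - 1) / 2\<rfloor>. g (int m - 2 * j))
       = (\<Sum>j = 1..\<lceil>(real m - 1) / 2\<rceil>. g (int m - 2 * j + 1))
         + (\<Sum>i = 1..m. (-1) ^ (m - i) * g (int i))" (is "?S0 = _")
proof -
  obtain n where m: "m = Suc n"
    using assms by (cases m) auto
  have floor: "\<lfloor>(real m - 1) / 2\<rfloor> = int (n div 2)"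
    using floor_divide_of_nat_eq[of n 2] by (simp add: m)
  have ceiling: "\<lceil>(real m - 1) / 2\<rceil> = int (Suc n div 2)"
    unfolding m by (rule ceiling_unique; cases "even n") (auto elim!: evenE oddE)
  have int_sum: "(\<Sum>j = int a..int b. h j) = (\<Sum>j = a..b. h (int j))" for a b and h :: "int \<Rightarrow> 'a"
    by (simp add: sum.reindex image_int_atLeastAtMost[symmetric])
  have "?S1 = (\<Sum>j = 1..n div 2. g (int n + 1 - 2 * int j))"
    and "?T = (\<Sum>j = 1..Suc n div 2. g (int n + 2 - 2 * int j))"
    and "?S0 = g (int m) + ?S1"
    unfolding floor ceiling using int_sum[where a = 1] int_sum[where a = 0]
    by (simp_all add: m sum.atLeast_Suc_atMost algebra_simps del: sum.cl_ivl_Suc)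
  moreover have "(\<Sum>i = 1..n. (-1) ^ (Suc n - i) * g (int i)) = - (\<Sum>i = 1..n. (-1) ^ (n - i) * g (int i))"
    by (simp add: sum_negf[symmetric] Suc_diff_le)
  ultimately show "?S1 = ?T + (\<Sum>i = 1..m - 1. (-1) ^ (m - i) * g (int i))"
    and "?S0 = ?T + (\<Sum>i = 1..m. (-1) ^ (m - i) * g (int i))"
    using sum_alternating_parity_split[of g n] sum_alternating_Suc[where g = "\<lambda>i. g (int i)" and n = n]
    by (simp_all add: m algebra_simps)
qed

lemma alpha_minus_beta: "alpha - beta = sqrt 5"
  by (simp add: alpha_def beta_def field_simps)

lemma Fib_of_nat: "Fib (int n) = (alpha ^ n - beta ^ n) / sqrt 5"
  by (simp add: Fib_def alpha_minus_beta)

lemma Luc_of_nat: "Luc (int n) = alpha ^ n + beta ^ n"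
  by (simp add: Luc_def)

lemma alpha_pos: "alpha > 0"
  by (simp add: alpha_def add_pos_nonneg)

lemma sqrt5_gt_1: "sqrt 5 > (1::real)"
  by (simp add: real_less_rsqrt)

lemma sums_choose_mult_power_sqrt5:
  shows "(\<lambda>n. real (n choose j) * (1 / sqrt 5) ^ n) sums (sqrt 5 * (alpha / 2) ^ Suc j)"
    and "(\<lambda>n. (-1) ^ n * (real (n choose j) * (1 / sqrt 5) ^ n)) sums (- sqrt 5 * (beta / 2) ^ Suc j)"
proof -
  have geom: "t ^ j / (1 - t) ^ Suc j = (t / (1 - t)) ^ Suc j / t" if "t \<noteq> 0" for t :: real
    using that by (simp add: power_divide)
  have nonzero: "1 / sqrt 5 \<noteq> (0::real)" "- 1 / sqrt 5 \<noteq> (0::real)"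
    by simp_all
  have ratio_pos: "1 / sqrt 5 / (1 - 1 / sqrt 5) = alpha / 2"
    using sqrt5_gt_1 by (simp add: alpha_def field_simps)
  have "(1 / sqrt 5) ^ j / (1 - 1 / sqrt 5) ^ Suc j = sqrt 5 * (alpha / 2) ^ Suc j"
    unfolding geom[OF nonzero(1)] ratio_pos by simp
  moreover have "(\<lambda>n. real (n choose j) * (1 / sqrt 5) ^ n) sums ((1 / sqrt 5) ^ j / (1 - 1 / sqrt 5) ^ Suc j)"
    using sqrt5_gt_1 by (intro sums_choose_mult_power) simp
  ultimately show "(\<lambda>n. real (n choose j) * (1 / sqrt 5) ^ n) sums (sqrt 5 * (alpha / 2) ^ Suc j)"
    by (simp only:)
  have "1 + sqrt 5 \<noteq> (0::real)"
    using sqrt5_gt_1 by linarith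
  then have ratio_neg: "- 1 / sqrt 5 / (1 - - 1 / sqrt 5) = beta / 2"
    by (simp add: beta_def field_simps)
  have "(- 1 / sqrt 5) ^ j / (1 - - 1 / sqrt 5) ^ Suc j = - sqrt 5 * (beta / 2) ^ Suc j"
    unfolding geom[OF nonzero(2)] ratio_neg by simp
  moreover have "(\<lambda>n. real (n choose j) * (- 1 / sqrt 5) ^ n) sums ((- 1 / sqrt 5) ^ j / (1 - - 1 / sqrt 5) ^ Suc j)"
    using sqrt5_gt_1 by (intro sums_choose_mult_power) simp
  ultimately show "(\<lambda>n. (-1) ^ n * (real (n choose j) * (1 / sqrt 5) ^ n)) sums (- sqrt 5 * (beta / 2) ^ Suc j)"
    by (simp add: power_minus' mult_ac)
qed

lemma sums_choose_even_div_power5: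
  "(\<lambda>k. real (2 * k choose j) / 5 ^ k) sums (5 * Fib (int (Suc j)) / 2 ^ Suc (Suc j))"
proof -
  have sqrt_5_twice: "sqrt 5 * (sqrt 5 * x) = 5 * x" for x :: real
    by (simp flip: mult.assoc)
  have "(\<lambda>k. real (2 * k choose j) * (1 / sqrt 5) ^ (2 * k)) sums
      ((sqrt 5 * (alpha / 2) ^ Suc j + - sqrt 5 * (beta / 2) ^ Suc j) / 2)"
    by (rule sums_even_odd_terms(1)[OF sums_choose_mult_power_sqrt5])
  moreover have "(1 / sqrt 5) ^ (2 * k) = 1 / (5::real) ^ k" for k
    by (simp add: power_mult power_divide)
  moreover have "(sqrt 5 * (alpha / 2) ^ Suc j + - sqrt 5 * (beta / 2) ^ Suc j) / 2
      = 5 * Fib (int (Suc j)) / 2 ^ Suc (Suc j)"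
    unfolding Fib_of_nat by (simp add: power_divide field_simps sqrt_5_twice)
  ultimately show ?thesis
    by simp
qed

lemma sums_choose_odd_div_power5:
  "(\<lambda>k. real (2 * k + 1 choose j) / 5 ^ k) sums (5 * Luc (int (Suc j)) / 2 ^ Suc (Suc j))"
proof -
  have sqrt_5_twice: "sqrt 5 * (sqrt 5 * x) = 5 * x" for x :: real
    by (simp flip: mult.assoc)
  have "(\<lambda>k. real (2 * k + 1 choose j) * (1 / sqrt 5) ^ (2 * k + 1)) sums
      ((sqrt 5 * (alpha / 2) ^ Suc j - - sqrt 5 * (beta / 2) ^ Suc j) / 2)"
    by (rule sums_even_odd_terms(2)[OF sums_choose_mult_power_sqrt5])
  then have "(\<lambda>k. sqrt 5 * (real (2 * k + 1 choose j) * (1 / sqrt 5) ^ (2 * k + 1))) sums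
      (sqrt 5 * ((sqrt 5 * (alpha / 2) ^ Suc j - - sqrt 5 * (beta / 2) ^ Suc j) / 2))"
    by (rule sums_mult)
  moreover have "sqrt 5 * (1 / sqrt 5) ^ (2 * k + 1) = 1 / (5::real) ^ k" for k
    by (simp add: power_mult power_divide)
  moreover have "sqrt 5 * ((sqrt 5 * (alpha / 2) ^ Suc j - - sqrt 5 * (beta / 2) ^ Suc j) / 2)
      = 5 * Luc (int (Suc j)) / 2 ^ Suc (Suc j)"
    unfolding Luc_of_nat by (simp add: power_divide field_simps sqrt_5_twice)
  ultimately show ?thesis
    by (simp add: mult.left_commute[of "sqrt 5"])
qed

(* The k = 0 term is 1 / 0 = 0. *)
lemma sums_inverse_mult_power5_even:
  "(\<lambda>k. 1 / (5 ^ k * (2 * real k))) sums (ln (5 / 4) / 2)"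
proof -
  have "(\<lambda>n. - ((1 / 5) ^ n) / real n) sums ln (1 + - 1 / 5 :: real)"
    using ln_series'[of "- 1 / 5"] by simp
  then have "(\<lambda>n. - (- ((1 / 5) ^ n) / real n) / 2) sums (- ln (4 / 5 :: real) / 2)"
    by (intro sums_divide sums_minus) simp
  moreover have "- ln (4 / 5 :: real) = ln (5 / 4)"
    by (simp add: ln_div)
  ultimately show ?thesis
    by (simp add: power_divide ac_simps)
qed

lemma sums_inverse_mult_power5_odd:
  "(\<lambda>k. 1 / (5 ^ k * (2 * real k + 1))) sums (sqrt 5 * ln alpha)"
proof -
  have alpha_sq: "alpha\<^sup>2 = alpha + 1"
    by (simp add: alpha_def power2_eq_square field_simps)
  have "alpha + 2 = sqrt 5 * alpha"
    by (simp add: alpha_def field_simps)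
  then have "(alpha\<^sup>2 - 1) / (alpha\<^sup>2 + 1) = 1 / sqrt 5"
    unfolding alpha_sq using alpha_pos by (simp add: add.assoc)
  then have "(\<lambda>k. 2 * (1 / sqrt 5) ^ (2 * k + 1) / real (2 * k + 1)) sums ln (alpha\<^sup>2)"
    using ln_series_quadratic[of "alpha\<^sup>2"] alpha_pos by simp
  then have "(\<lambda>k. sqrt 5 / 2 * (2 * (1 / sqrt 5) ^ (2 * k + 1) / real (2 * k + 1))) sums
      (sqrt 5 / 2 * ln (alpha\<^sup>2))"
    by (rule sums_mult)
  moreover have "sqrt 5 / 2 * (2 * (1 / sqrt 5) ^ (2 * k + 1) / real (2 * k + 1))
      = 1 / (5 ^ k * (2 * real k + 1))" for k
    by (simp add: power_mult power_divide)
  moreover have "sqrt 5 / 2 * ln (alpha\<^sup>2) = sqrt 5 * ln alpha"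
    using alpha_pos by (simp add: ln_realpow)
  ultimately show ?thesis
    by simp
qed

lemma sums_choose_div_power5_succ:
  "(\<lambda>k. real (2 * k choose m) / (5 ^ k * (2 * real k + 1))) sums
     ((-1) ^ m * sqrt 5 * ln alpha + 5 / 2 * (\<Sum>i = 1..m. (-1) ^ (m - i) * Fib (int i) / (real i * 2 ^ i)))"
proof -
  have "real (2 * k choose m) / (5 ^ k * (2 * real k + 1))
      = (-1) ^ m * (1 / (5 ^ k * (2 * real k + 1)))
        + (\<Sum>i = 1..m. (-1) ^ (m - i) / real i * (real (2 * k choose (i - 1)) / 5 ^ k))" for k
  proof -
    have "real (2 * k choose m) / (5 ^ k * (2 * real k + 1))
        = (real (2 * k choose m) / real (Suc (2 * k))) / 5 ^ k"
      by (simp add: field_simps)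
    also have "\<dots> = ((-1) ^ m / real (Suc (2 * k))
        + (\<Sum>i = 1..m. (-1) ^ (m - i) * real (2 * k choose (i - 1)) / real i)) / 5 ^ k"
      by (simp only: choose_div_Suc_alternating)
    finally show ?thesis
      by (simp add: add_divide_distrib sum_divide_distrib mult_ac)
  qed
  moreover have "(\<lambda>k. real (2 * k choose (i - 1)) / 5 ^ k) sums (5 * Fib (int i) / 2 ^ Suc i)"
    if "i \<in> {1..m}" for i
  proof -
    have "Suc (i - 1) = i"
      using that by simp
    then show ?thesis
      using sums_choose_even_div_power5[of "i - 1"] by (simp only:)
  qed
  then have "(\<lambda>k. (-1) ^ m * (1 / (5 ^ k * (2 * real k + 1)))
        + (\<Sum>i = 1..m. (-1) ^ (m - i) / real i * (real (2 * k choose (i - 1)) / 5 ^ k))) sums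
      ((-1) ^ m * (sqrt 5 * ln alpha) + (\<Sum>i = 1..m. (-1) ^ (m - i) / real i * (5 * Fib (int i) / 2 ^ Suc i)))"
    by (intro sums_add sums_mult sums_sum sums_inverse_mult_power5_odd)
  ultimately show ?thesis
    by (simp add: sum_distrib_left mult_ac)
qed

lemma choose_double_Suc_div_power5_square:
  "real (2 * Suc k choose Suc r) / (5 ^ Suc k * (real (Suc k))\<^sup>2)
     = 4 / real (Suc r) * ((-1) ^ r * (1 / (5 ^ Suc k * (2 * real (Suc k))))
       + (\<Sum>i = 1..r. (-1) ^ (r - i) / real i * (real (2 * k + 1 choose (i - 1)) / 5 ^ Suc k)))"
proof -
  have double: "c / (y * x\<^sup>2) = 4 / y * (c / (2 * x)\<^sup>2)" for c y x :: real
    by (simp add: power2_eq_square)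
  have regroup: "4 / y * ((a / n + s) / q) = 4 / q * (a * (1 / (y * n)) + s / y)" for a n s q y :: real
    by (simp add: divide_inverse algebra_simps inverse_mult_distrib)
  have "2 * Suc k = Suc (2 * k + 1)" and "2 * real (Suc k) = real (Suc (2 * k + 1))"
    by simp_all
  then have "real (2 * Suc k choose Suc r) / (5 ^ Suc k * (real (Suc k))\<^sup>2)
      = 4 / 5 ^ Suc k * (real (Suc (2 * k + 1) choose Suc r) / (real (Suc (2 * k + 1)))\<^sup>2)"
    by (simp only: double)
  also have "\<dots> = 4 / real (Suc r) * ((-1) ^ r * (1 / (5 ^ Suc k * (2 * real (Suc k))))
      + (\<Sum>i = 1..r. (-1) ^ (r - i) / real i * (real (2 * k + 1 choose (i - 1)) / 5 ^ Suc k)))"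
    unfolding choose_div_Suc_square_alternating regroup by (simp add: sum_divide_distrib)
  finally show ?thesis .
qed

lemma sums_choose_div_power5_square:
  assumes "m \<ge> 1"
  shows "(\<lambda>k. real (2 * k choose m) / (5 ^ k * (real k)\<^sup>2)) sums
     (- 2 / real m * ((-1) ^ m * ln (5 / 4)
        + (\<Sum>i = 1..m - 1. (-1) ^ (m - i) * Luc (int i) / (real i * 2 ^ i))))"
proof -
  obtain r where m: "m = Suc r"
    using assms by (cases m) auto
  note summand = choose_double_Suc_div_power5_square[where r = r]
  have "(\<lambda>k. 1 / (5 ^ Suc k * (2 * real (Suc k)))) sums (ln (5 / 4) / 2)"
    using sums_inverse_mult_power5_even by (subst sums_Suc_iff) simp
  moreover have "(\<lambda>k. real (2 * k + 1 choose (i - 1)) / 5 ^ Suc k) sums (Luc (int i) / 2 ^ Suc i)"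
    if "i \<in> {1..r}" for i
  proof -
    have "Suc (i - 1) = i"
      using that by simp
    then have "(\<lambda>k. real (2 * k + 1 choose (i - 1)) / 5 ^ k / 5) sums (5 * Luc (int i) / 2 ^ Suc i / 5)"
      using sums_divide[OF sums_choose_odd_div_power5[of "i - 1"], of 5] by (simp only:)
    then show ?thesis
      by (simp add: mult_ac)
  qed
  moreover have "- 2 / real m * ((-1) ^ m * ln (5 / 4)
        + (\<Sum>i = 1..m - 1. (-1) ^ (m - i) * Luc (int i) / (real i * 2 ^ i)))
      = 4 / real (Suc r) * ((-1) ^ r * (ln (5 / 4) / 2)
        + (\<Sum>i = 1..r. (-1) ^ (r - i) / real i * (Luc (int i) / 2 ^ Suc i)))"
    unfolding m by (simp add: sum_distrib_left sum_negf Suc_diff_le field_simps)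
  ultimately have "(\<lambda>k. real (2 * Suc k choose Suc r) / (5 ^ Suc k * (real (Suc k))\<^sup>2)) sums
      (- 2 / real m * ((-1) ^ m * ln (5 / 4)
        + (\<Sum>i = 1..m - 1. (-1) ^ (m - i) * Luc (int i) / (real i * 2 ^ i))))"
    by (simp only: summand) (intro sums_mult sums_add sums_sum)
  then show ?thesis
    unfolding m
    using sums_Suc_iff[of "\<lambda>k. real (2 * k choose Suc r) / (5 ^ k * (real k)\<^sup>2)"] by simp
qed

lemma sums_choose_div_power5_pred:
  assumes "m \<ge> 2"
  shows "(\<lambda>k. real (2 * k choose m) / (5 ^ k * (2 * real k - 1))) sums
     ((Fib (int m) / (real m * 2 ^ m) + Fib (int m - 1) / ((real m - 1) * 2 ^ (m - 1))) / 2)"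
proof -
  obtain r where m: "m = Suc (Suc r)"
    using assms by (metis add_2_eq_Suc le_Suc_ex)
  have "real (2 * Suc k choose Suc (Suc r)) / (5 ^ Suc k * (2 * real (Suc k) - 1))
      = real (2 * k choose Suc r) / 5 ^ Suc k / real (Suc (Suc r))
        + real (2 * k choose r) / 5 ^ Suc k / real (Suc r)" for k
  proof -
    have "2 * Suc k = Suc (Suc (2 * k))" and "2 * real (Suc k) - 1 = real (Suc (2 * k))"
      by simp_all
    then have "real (2 * Suc k choose Suc (Suc r)) / (5 ^ Suc k * (2 * real (Suc k) - 1))
        = real (Suc (Suc (2 * k)) choose Suc (Suc r)) / real (Suc (2 * k)) / 5 ^ Suc k"
      by (simp only: divide_divide_eq_left mult.commute)
    then show ?thesis
      by (simp only: choose_Suc_Suc_div_Suc add_divide_distrib divide_divide_eq_left mult.commute)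
  qed
  moreover have "(\<lambda>k. real (2 * k choose j) / 5 ^ Suc k) sums (Fib (int (Suc j)) / 2 ^ Suc (Suc j))" for j
    using sums_divide[OF sums_choose_even_div_power5[of j], of 5] by (simp add: mult_ac)
  ultimately have "(\<lambda>k. real (2 * Suc k choose Suc (Suc r)) / (5 ^ Suc k * (2 * real (Suc k) - 1))) sums
      (Fib (int (Suc (Suc r))) / 2 ^ Suc (Suc (Suc r)) / real (Suc (Suc r))
        + Fib (int (Suc r)) / 2 ^ Suc (Suc r) / real (Suc r))"
    by (simp only:) (intro sums_add sums_divide)
  moreover have "Fib (int (Suc (Suc r))) / 2 ^ Suc (Suc (Suc r)) / real (Suc (Suc r))
        + Fib (int (Suc r)) / 2 ^ Suc (Suc r) / real (Suc r)
      = (Fib (int m) / (real m * 2 ^ m) + Fib (int m - 1) / ((real m - 1) * 2 ^ (m - 1))) / 2"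
    unfolding m by (simp add: add_divide_distrib mult_ac)
  ultimately have "(\<lambda>k. real (2 * Suc k choose Suc (Suc r)) / (5 ^ Suc k * (2 * real (Suc k) - 1))) sums
      ((Fib (int m) / (real m * 2 ^ m) + Fib (int m - 1) / ((real m - 1) * 2 ^ (m - 1))) / 2)"
    by (simp only:)
  then show ?thesis
    unfolding m
    using sums_Suc_iff[of "\<lambda>k. real (2 * k choose Suc (Suc r)) / (5 ^ k * (2 * real k - 1))"] by simp
qed

lemma sums_choose_div_power5_quartic:
  assumes "m \<ge> 2"
  shows "(\<lambda>k. if k = 0 then 0 else
           real ((2 * k) choose m) / (5 ^ k * (2 * real k - 1) * (real k)^2 * (2 * real k + 1)))
     sums
     (2 * (-1) ^ m / real m * ln (5 / 4) - (-1) ^ m * 2 * sqrt 5 * ln alpha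
      + Fib (int m - 1) / (real m - 1) / 2 ^ (m - 1) + Fib (int m) / real m / 2 ^ m
      + 2 / real m * (\<Sum>i = 1..m - 1. (-1) ^ (m - i) * Luc (int i) / (real i * 2 ^ i))
      - 5 * (\<Sum>i = 1..m. (-1) ^ (m - i) * Fib (int i) / (real i * 2 ^ i)))"
    (is "_ sums ?sum")
proof -
  have m: "m \<ge> 1"
    using assms by simp
  have "(if k = 0 then 0 else
           real ((2 * k) choose m) / (5 ^ k * (2 * real k - 1) * (real k)^2 * (2 * real k + 1)))
      = - (real (2 * k choose m) / (5 ^ k * (real k)\<^sup>2))
        + 2 * (real (2 * k choose m) / (5 ^ k * (2 * real k - 1)))
        - 2 * (real (2 * k choose m) / (5 ^ k * (2 * real k + 1)))" for k
  proof (cases "k = 0")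
    case False
    then have "real k \<noteq> 0" "2 * real k - 1 \<noteq> 0" "2 * real k + 1 \<noteq> 0"
      by linarith+
    with False show ?thesis
      by (simp add: partial_fractions_quartic)
  qed (use m in simp)
  note summands = sums_cong[OF this]
  note sums_diff[OF sums_add[OF sums_minus[OF sums_choose_div_power5_square[OF m]]
      sums_mult[OF sums_choose_div_power5_pred[OF assms], of 2]]
      sums_mult[OF sums_choose_div_power5_succ[of m], of 2]]
  also have "- (- 2 / real m * ((-1) ^ m * ln (5 / 4)
        + (\<Sum>i = 1..m - 1. (-1) ^ (m - i) * Luc (int i) / (real i * 2 ^ i))))
      + 2 * ((Fib (int m) / (real m * 2 ^ m) + Fib (int m - 1) / ((real m - 1) * 2 ^ (m - 1))) / 2)
      - 2 * ((-1) ^ m * sqrt 5 * ln alpha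
        + 5 / 2 * (\<Sum>i = 1..m. (-1) ^ (m - i) * Fib (int i) / (real i * 2 ^ i)))
      = ?sum"
    by (simp add: algebra_simps)
  finally show ?thesis
    by (simp only: summands)
qed

theorem theorem19:
  fixes m :: nat
  assumes "m \<ge> 2"
  shows "(\<lambda>k. if k = 0 then 0 else
           real ((2 * k) choose m) / (5 ^ k * (2 * real k - 1) * (real k)^2 * (2 * real k + 1)))
     sums
     (2 * (-1) ^ m / real m * ln (5 / 4) - (-1) ^ m * 2 * sqrt 5 * ln alpha
      + Fib (int m - 1) / (real m - 1) / 2 ^ (m - 1) + Fib (int m) / real m / 2 ^ m
      + 2 / real m * (\<Sum>j = 1..\<lfloor>(real m - 1) / 2\<rfloor>.
            Luc (int m - 2 * j) / (real_of_int (int m - 2 * j)) / 2 powi (int m - 2 * j))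
      - 2 / real m * (\<Sum>j = 1..\<lceil>(real m - 1) / 2\<rceil>.
            Luc (int m - 2 * j + 1) / (real_of_int (int m - 2 * j + 1)) / 2 powi (int m - 2 * j + 1))
      - 5 * (\<Sum>j = 0..\<lfloor>(real m - 1) / 2\<rfloor>.
            Fib (int m - 2 * j) / (real_of_int (int m - 2 * j)) / 2 powi (int m - 2 * j))
      + 5 * (\<Sum>j = 1..\<lceil>(real m - 1) / 2\<rceil>.
            Fib (int m - 2 * j + 1) / (real_of_int (int m - 2 * j + 1)) / 2 powi (int m - 2 * j + 1)))"
proof -
  have m: "m \<ge> 1"
    using assms by simp
  let "_ sums ?rhs" = ?thesis
  note sums_choose_div_power5_quartic[OF assms]
  also have "2 * (-1) ^ m / real m * ln (5 / 4) - (-1) ^ m * 2 * sqrt 5 * ln alpha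
      + Fib (int m - 1) / (real m - 1) / 2 ^ (m - 1) + Fib (int m) / real m / 2 ^ m
      + 2 / real m * (\<Sum>i = 1..m - 1. (-1) ^ (m - i) * Luc (int i) / (real i * 2 ^ i))
      - 5 * (\<Sum>i = 1..m. (-1) ^ (m - i) * Fib (int i) / (real i * 2 ^ i)) = ?rhs"
    unfolding sum_floor_ceiling_half_alternating[OF m, of "\<lambda>i. Luc i / real_of_int i / 2 powi i"]
      sum_floor_ceiling_half_alternating[OF m, of "\<lambda>i. Fib i / real_of_int i / 2 powi i"]
    by (simp add: algebra_simps)
  finally show ?thesis .
qed

end
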